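(* Let $k\ge1$ and let $M^*$ be constructed from quadrature rules $Q_i^k$ as in the context (with $Q_i^k$ exact on $\mathbb P^{k-1}(I_i)$). Then the bilinear form $(v,\omega)\mapsto (v,M^*\omega)$ is an inner product on $\mathbb V^k$ if and only if for every cell $I_i$ both of the following hold: (1) $R_i^k(v)=0$ for all $v\in\mathbb P^{2k-1}(I_i)$; (2) $\frac{h_i}{2k-1}-Q_i^k(L_{i,k+1}L_{i,k-1})>0$.
   Context: Let $\Omega=[a,b]$ be partitioned into finitely many cells $I_i=[x_{i-\frac12},x_{i+\frac12}]$ with sizes $h_i=x_{i+\frac12}-x_{i-\frac12}$. $(\cdot,\cdot)$ is the $L^2(\Omega)$ inner product and $(\cdot,\cdot)_{I_i}$ the $L^2(I_i)$ inner product. $\mathbb V^k=\{v\in L^2(\Omega): v|_{I_i}\in\mathbb P^k(I_i)\ \forall i\}$. Each $I_i$ has subdivision points $x_{i-\frac12}=x_{i,0}<x_{i,1}<\dots<x_{i,k}<x_{i,k+1}=x_{i+\frac12}$ and control volumes $I_{i,j}=[x_{i,j},x_{i,j+1}]$, $j=0,\dots,k$; $\mathbb V^{k,*}$ is the space of functions constant on each $I_{i,j}$. On each $I_i$ a quadrature $Q_i^k(v)=\sum_{j=0}^{k+1}A_{i,j}v(x_{i,j})$ is given, with error $R_i^k(v)=\int_{I_i}v\,dx-Q_i^k(v)$, and it is assumed that $R_i^k(v)=0$ for all $v\in\mathbb P^{k-1}(I_i)$. The operator $M^*:\mathbb V^k\to\mathbb V^{k,*}$ is defined cellwise: for $v=\omega|_{I_i}$,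 $(M^*\omega)|_{I_{i,0}}=v(x_{i-\frac12})+A_{i,0}v'(x_{i-\frac12})$ and $(M^*\omega)|_{I_{i,j}}-(M^*\omega)|_{I_{i,j-1}}=A_{i,j}v'(x_{i,j})$, $j=1,\dots,k$ (values and derivatives at endpoints taken from inside $I_i$). $L_{i,\ell}$ denotes the shifted Legendre polynomial of degree $\ell$ on $I_i$ (the Legendre polynomial $P_\ell$ composed with the affine map of $I_i$ onto $[-1,1]$), so that $L_{i,\ell}(x_{i+\frac12})=1$ and $(L_{i,\ell},L_{i,m})_{I_i}=\delta_{\ell m}\,h_i/(2\ell+1)$. *)

theory Defs
  imports "HOL-Analysis.Analysis" "HOL-Computational_Algebra.Polynomial"
begin

(* Cells I_i = [x i, x (Suc i)], i < N.  Subdivision points of I_i: s i j, j = 0..k+1.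
   Quadrature weights of Q_i^k: A i j, j = 0..k+1.
   An element of V^k is represented by its cellwise polynomials v i (i < N),
   with v i = 0 for i >= N as a normalisation. *)

definition Qrule :: "nat \<Rightarrow> (nat \<Rightarrow> real) \<Rightarrow> (nat \<Rightarrow> real) \<Rightarrow> (real \<Rightarrow> real) \<Rightarrow> real" where
  "Qrule k s A f = (\<Sum>j\<le>k+1. A j * f (s j))"

definition Rerr :: "real \<Rightarrow> real \<Rightarrow> nat \<Rightarrow> (nat \<Rightarrow> real) \<Rightarrow> (nat \<Rightarrow> real) \<Rightarrow> (real \<Rightarrow> real) \<Rightarrow> real" where
  "Rerr a b k s A f = integral {a..b} f - Qrule k s A f"

(* value of M^* omega on the control volume I_{i,j}, where p = omega restricted to I_i:
   c_0 = p(x_{i,0}) + A_0 p'(x_{i,0}),  c_j = c_{j-1} + A_j p'(x_{i,j}) *)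
definition Mstar_coef :: "(nat \<Rightarrow> real) \<Rightarrow> (nat \<Rightarrow> real) \<Rightarrow> real poly \<Rightarrow> nat \<Rightarrow> real" where
  "Mstar_coef s A p j = poly p (s 0) + (\<Sum>l\<le>j. A l * poly (pderiv p) (s l))"

definition bform :: "nat \<Rightarrow> nat \<Rightarrow> (nat \<Rightarrow> nat \<Rightarrow> real) \<Rightarrow> (nat \<Rightarrow> nat \<Rightarrow> real)
    \<Rightarrow> (nat \<Rightarrow> real poly) \<Rightarrow> (nat \<Rightarrow> real poly) \<Rightarrow> real" where
  "bform N k s A v w = (\<Sum>i<N. \<Sum>j\<le>k.
      Mstar_coef (s i) (A i) (w i) j * integral {s i j..s i (Suc j)} (poly (v i)))"

definition Vk :: "nat \<Rightarrow> nat \<Rightarrow> (nat \<Rightarrow> real poly) set" where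
  "Vk N k = {v. (\<forall>i<N. degree (v i) \<le> k) \<and> (\<forall>i\<ge>N. v i = 0)}"

definition is_inner_product :: "(nat \<Rightarrow> real poly) set \<Rightarrow> ((nat \<Rightarrow> real poly) \<Rightarrow> (nat \<Rightarrow> real poly) \<Rightarrow> real) \<Rightarrow> bool" where
  "is_inner_product V B \<longleftrightarrow>
     (\<forall>u\<in>V. \<forall>v\<in>V. \<forall>w\<in>V. \<forall>c::real.
        B (\<lambda>i. smult c (u i) + v i) w = c * B u w + B v w \<and>
        B w (\<lambda>i. smult c (u i) + v i) = c * B w u + B w v) \<and>
     (\<forall>v\<in>V. \<forall>w\<in>V. B v w = B w v) \<and>
     (\<forall>v\<in>V. v \<noteq> (\<lambda>i. 0) \<longrightarrow> B v v > 0)"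

fun legendre :: "nat \<Rightarrow> real poly" where
  "legendre 0 = 1"
| "legendre (Suc 0) = [:0, 1:]"
| "legendre (Suc (Suc n)) =
     smult (1 / (real n + 2)) (smult (2 * real n + 3) ([:0, 1:] * legendre (Suc n)) - smult (real n + 1) (legendre n))"

definition shifted_legendre :: "real \<Rightarrow> real \<Rightarrow> nat \<Rightarrow> real poly" where
  "shifted_legendre a b l = pcompose (legendre l) [: -(a + b) / (b - a), 2 / (b - a) :]"

end

theory Submission
  imports Defs
begin

(* Summation by parts over the control volumes of a cell I = [a, b] gives
     (v, M^* w)_I = (v, w)_I - R(w' U),   where U(x) = integral of v over [x, b].
   For v, w of degree at most k the arguments of the error terms R(w' U_v) and R(v' U_w)
   have degree at most 2k and equal x^(2k)-coefficients, so exactness of the quadrature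
   on P^(2k-1) makes the form symmetric; conversely, testing symmetry on powers of (b - x)
   forces that exactness.  Under exactness the form agrees with the L^2 product except
   along the Legendre polynomial L_k: writing v = alpha L_k + q with deg q < k,
     (v, M^* v)_I = alpha^2 (L_k, M^* L_k)_I + ||q||^2,
   and the Legendre recurrences give
     (L_k, M^* L_k)_I = (h - (2k-1) Q(L_(k+1) L_(k-1))) / (2k+1). *)

lemma integrable_poly [simp]: "poly p integrable_on {a..b::real}"
  by (intro integrable_continuous_interval continuous_intros)

lemma integral_poly_0 [simp]: "integral {a..b::real} (poly 0) = 0"
  by (simp add: poly_0[abs_def])

lemma integral_poly_add:
  "integral {a..b::real} (poly (p + q)) = integral {a..b} (poly p) + integral {a..b} (poly q)"
  by (simp add: poly_add[abs_def] integral_add)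

lemma integral_poly_diff:
  "integral {a..b::real} (poly (p - q)) = integral {a..b} (poly p) - integral {a..b} (poly q)"
  by (simp add: poly_diff[abs_def] integral_diff)

lemma integral_poly_minus: "integral {a..b::real} (poly (- p)) = - integral {a..b} (poly p)"
  by (simp add: poly_minus[abs_def])

lemma integral_poly_smult: "integral {a..b::real} (poly (smult c p)) = c * integral {a..b} (poly p)"
  by (simp add: poly_smult[abs_def])

lemma integral_poly_pderiv:
  fixes p :: "real poly"
  assumes "a \<le> b"
  shows "integral {a..b} (poly (pderiv p)) = poly p b - poly p a"
proof -
  have "(poly (pderiv p) has_integral (poly p b - poly p a)) {a..b}"
    by (intro fundamental_theorem_of_calculus assms)
       (auto intro!: DERIV_subset[OF poly_DERIV]
             simp: has_real_derivative_iff_has_vector_derivative[symmetric])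
  then show ?thesis
    by (rule integral_unique)
qed

lemma integral_poly_by_parts:
  fixes p q :: "real poly"
  assumes "a \<le> b"
  shows "integral {a..b} (poly (pderiv p * q)) =
    poly (p * q) b - poly (p * q) a - integral {a..b} (poly (p * pderiv q))"
  using integral_poly_pderiv[OF assms, of "p * q"]
  by (simp add: pderiv_mult integral_poly_add algebra_simps)

lemma integral_poly_square_pos:
  fixes q :: "real poly"
  assumes "a < b" and "q \<noteq> 0"
  shows "integral {a..b} (poly (q * q)) > 0"
proof -
  have nonneg: "\<And>x. x \<in> {a..b} \<Longrightarrow> poly (q * q) x \<ge> 0"
    by simp
  have cont: "continuous_on {a..b} (poly (q * q))"
    by (intro continuous_intros)
  have "integral {a..b} (poly (q * q)) \<noteq> 0"
  proof
    assume "integral {a..b} (poly (q * q)) = 0"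
    then have "\<forall>x\<in>{a..b}. poly (q * q) x = 0"
      using integral_eq_0_iff[OF cont assms(1) nonneg] by blast
    then have "{a..b} \<subseteq> {x. poly q x = 0}"
      by auto
    then have "finite {a..b}"
      using poly_roots_finite[OF assms(2)] by (rule finite_subset)
    with infinite_Icc[OF assms(1)] show False
      by simp
  qed
  moreover have "integral {a..b} (poly (q * q)) \<ge> 0"
    using nonneg by (intro integral_nonneg) auto
  ultimately show ?thesis
    by simp
qed

lemma poly_antiderivative_exists: "\<exists>V. pderiv V = (q :: real poly)"
proof -
  let ?V = "\<Sum>i\<le>degree q. monom (coeff q i / (1 + real i)) (Suc i)"
  have "pderiv ?V = (\<Sum>i\<le>degree q. monom (coeff q i) i)"
    using higher_pderiv_sum[of 1 "\<lambda>i. monom (coeff q i / (1 + real i)) (Suc i)"]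
    by (simp add: pderiv_monom)
  also have "\<dots> = q"
    by (rule poly_as_sum_of_monoms)
  finally show ?thesis
    by blast
qed

lemma degree_le_Suc_degree_pderiv:
  "degree (p :: 'a::{idom,ring_char_0} poly) \<le> Suc (degree (pderiv p))"
  by (simp add: degree_pderiv)

lemma degree_pderiv_mult_le:
  "degree (pderiv (p :: 'a::{idom,ring_char_0} poly) * q) \<le> degree p + degree q - 1"
proof (cases "degree p = 0")
  case True
  then show ?thesis
    by (simp add: pderiv_eq_0_iff[THEN iffD2])
next
  case False
  then show ?thesis
    using degree_mult_le[of "pderiv p" q] by (simp add: degree_pderiv)
qed

lemma degree_le_pred_if_coeff_eq_0:
  assumes "degree p \<le> n" and "coeff p n = 0"
  shows "degree p \<le> n - 1"
  using assms by (cases "degree p = n") auto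

lemma coeff_mult_at_degree_bounds:
  fixes p q :: "'a::idom poly"
  assumes "degree p \<le> m" and "degree q \<le> n"
  shows "coeff (p * q) (m + n) = coeff p m * coeff q n"
proof (cases "degree p = m \<and> degree q = n")
  case True
  then show ?thesis
    using coeff_mult_degree_sum[of p q] by simp
next
  case False
  then have "degree p < m \<or> degree q < n"
    using assms by auto
  moreover from this have "degree (p * q) < m + n"
    using assms degree_mult_le[of p q] by linarith
  moreover from \<open>degree p < m \<or> degree q < n\<close> have "coeff p m = 0 \<or> coeff q n = 0"
    by (auto intro: coeff_eq_0)
  ultimately show ?thesis
    by (auto intro: coeff_eq_0)
qed

lemma summation_by_parts:
  fixes c :: "'a::comm_ring"
  shows "(\<Sum>j\<le>n. (c + (\<Sum>l\<le>j. g l)) * (f j - f (Suc j))) =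
    c * (f 0 - f (Suc n)) + (\<Sum>l\<le>Suc n. g l * (f l - f (Suc n)))"
proof (induction n)
  case (Suc n)
  have "(\<Sum>j\<le>Suc n. (c + (\<Sum>l\<le>j. g l)) * (f j - f (Suc j))) =
      c * (f 0 - f (Suc n)) + (\<Sum>l\<le>Suc n. g l * (f l - f (Suc n)))
      + (c + (\<Sum>l\<le>Suc n. g l)) * (f (Suc n) - f (Suc (Suc n)))"
    using Suc.IH by simp
  also have "\<dots> = c * (f 0 - f (Suc (Suc n))) + (\<Sum>l\<le>Suc n. g l * (f l - f (Suc (Suc n))))"
    by (simp add: algebra_simps sum_distrib_left sum_distrib_right sum.distrib[symmetric])
  finally show ?case
    by simp
qed (simp add: algebra_simps)

section \<open>Legendre polynomials\<close>

lemma degree_legendre [simp]: "degree (legendre n) = n"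
proof (induction n rule: legendre.induct)
  case (3 n)
  have "legendre (Suc n) \<noteq> 0"
    using "3.IH" by (metis Zero_not_Suc degree_0)
  then have "degree (smult (2 * real n + 3) ([:0, 1:] * legendre (Suc n))) = Suc (Suc n)"
    using "3.IH" by simp
  moreover have "degree (smult (real n + 1) (legendre n)) = n"
    using "3.IH" by simp
  ultimately show ?case
    using degree_add_eq_left[of "- smult (real n + 1) (legendre n)"] by simp
qed simp_all

lemma poly_legendre_1 [simp]: "poly (legendre n) 1 = 1"
  by (induction n rule: legendre.induct) (auto simp: field_simps)

lemma poly_legendre_neg_1 [simp]: "poly (legendre n) (-1) = (-1) ^ n"
  by (induction n rule: legendre.induct) (auto simp: field_simps)

lemma pderiv_legendre_Suc_Suc_if:
  assumes "[:0, 1:] * pderiv (legendre (Suc n)) =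
    smult (real n + 1) (legendre (Suc n)) + pderiv (legendre n)"
  shows "pderiv (legendre (Suc (Suc n))) =
    smult (2 * real n + 3) (legendre (Suc n)) + pderiv (legendre n)"
proof (rule poly_ext)
  fix x
  have hyp: "x * poly (pderiv (legendre (Suc n))) x =
      (real n + 1) * poly (legendre (Suc n)) x + poly (pderiv (legendre n)) x"
    using arg_cong[OF assms, of "\<lambda>p. poly p x"] by simp
  have "poly (pderiv (legendre (Suc (Suc n)))) x =
      ((2 * real n + 3) * (poly (legendre (Suc n)) x + x * poly (pderiv (legendre (Suc n))) x)
        - (real n + 1) * poly (pderiv (legendre n)) x) / (real n + 2)"
    by (simp add: pderiv_smult pderiv_diff pderiv_mult pderiv_pCons field_simps)
  also have "\<dots> = (2 * real n + 3) * poly (legendre (Suc n)) x + poly (pderiv (legendre n)) x"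
    unfolding hyp by (simp add: field_simps)
  finally show "poly (pderiv (legendre (Suc (Suc n)))) x =
      poly (smult (2 * real n + 3) (legendre (Suc n)) + pderiv (legendre n)) x"
    by simp
qed

lemma x_mult_pderiv_legendre:
  "[:0, 1:] * pderiv (legendre (Suc n)) = smult (real n + 1) (legendre (Suc n)) + pderiv (legendre n)"
proof (induction n rule: legendre.induct)
  case 1
  show ?case
    by (simp add: pderiv_pCons)
next
  case 2
  show ?case
    by (intro poly_ext) (simp add: pderiv_smult pderiv_diff pderiv_mult pderiv_pCons field_simps)
next
  case (3 n)
  have rec: "legendre (Suc (Suc (Suc n))) = smult (1 / (real n + 3))
      (smult (2 * real n + 5) ([:0, 1:] * legendre (Suc (Suc n))) - smult (real n + 2) (legendre (Suc n)))"
    by (simp add: field_simps)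
  show ?case
  proof (rule poly_ext)
    fix x
    have "x * poly (pderiv (legendre (Suc n))) x =
        (real n + 1) * poly (legendre (Suc n)) x + poly (pderiv (legendre n)) x"
      using arg_cong[OF "3.IH"(2), of "\<lambda>p. poly p x"] by (simp del: legendre.simps)
    then show "poly ([:0, 1:] * pderiv (legendre (Suc (Suc (Suc n))))) x =
        poly (smult (real (Suc (Suc n)) + 1) (legendre (Suc (Suc (Suc n))))
          + pderiv (legendre (Suc (Suc n)))) x"
      unfolding pderiv_legendre_Suc_Suc_if[OF "3.IH"(1)]
      unfolding rec pderiv_legendre_Suc_Suc_if[OF "3.IH"(2)]
      by (simp add: field_simps del: legendre.simps)
  qed
qed

(* For n = 0 the index n - 1 truncates to 0, which is harmless: pderiv (legendre 0) = 0. *)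
lemma pderiv_legendre_Suc:
  "pderiv (legendre (Suc n)) = smult (2 * real n + 1) (legendre n) + pderiv (legendre (n - 1))"
proof (cases n)
  case 0
  then show ?thesis
    by (simp add: pderiv_pCons)
next
  case (Suc m)
  then show ?thesis
    using pderiv_legendre_Suc_Suc_if[OF x_mult_pderiv_legendre[of m]]
    by (simp add: algebra_simps del: legendre.simps)
qed

locale cell =
  fixes a b :: real
  assumes cell_nonempty: "a < b"
begin

abbreviation SL :: "nat \<Rightarrow> real poly" where
  "SL \<equiv> shifted_legendre a b"

lemma poly_shifted_legendre: "poly (SL n) x = poly (legendre n) ((2 * x - (a + b)) / (b - a))"
proof -
  have "- (a + b) / (b - a) + x * (2 / (b - a)) = (2 * x - (a + b)) / (b - a)"
    by (simp add: add_divide_distrib diff_divide_distrib)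
  then show ?thesis
    by (simp add: shifted_legendre_def poly_pcompose)
qed

lemma poly_shifted_legendre_right [simp]: "poly (SL n) b = 1"
  using cell_nonempty by (simp add: poly_shifted_legendre)

lemma poly_shifted_legendre_left [simp]: "poly (SL n) a = (-1) ^ n"
proof -
  have "(2 * a - (a + b)) / (b - a) = -1"
    using cell_nonempty by (simp add: field_simps)
  then show ?thesis
    by (simp add: poly_shifted_legendre)
qed

lemma degree_shifted_legendre [simp]: "degree (SL n) = n"
  using cell_nonempty by (simp add: shifted_legendre_def degree_pcompose)

lemma shifted_legendre_nonzero: "SL n \<noteq> 0"
  using poly_shifted_legendre_right[of n] by (metis poly_0 zero_neq_one)

lemma pderiv_shifted_legendre_Suc:
  "pderiv (SL (Suc n)) = smult (2 / (b - a) * (2 * real n + 1)) (SL n) + pderiv (SL (n - 1))"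
  unfolding shifted_legendre_def pderiv_pcompose pderiv_legendre_Suc
  by (simp add: pcompose_add pcompose_smult pderiv_pCons algebra_simps)

(* Read off from pderiv (SL (n + 1)) - pderiv (SL (n - 1)) = 2 (2n + 1) / (b - a) * SL n. *)
definition legendre_antideriv :: "nat \<Rightarrow> real poly" where
  "legendre_antideriv n = smult ((b - a) / (2 * (2 * real n + 1))) (SL (Suc n) - SL (n - 1))"

lemma pderiv_legendre_antideriv:
  assumes "1 \<le> n"
  shows "pderiv (legendre_antideriv n) = SL n"
proof -
  obtain m where m: "n = Suc m"
    using assms by (cases n) auto
  have "(b - a) / (2 * (2 * real n + 1)) * (2 / (b - a) * (2 * real n + 1)) = 1"
    using cell_nonempty by simp
  then show ?thesis
    unfolding legendre_antideriv_def pderiv_smult pderiv_diff m pderiv_shifted_legendre_Suc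
    by (simp add: smult_add_right)
qed

lemma poly_legendre_antideriv_right [simp]: "poly (legendre_antideriv n) b = 0"
  by (simp add: legendre_antideriv_def)

lemma poly_legendre_antideriv_left: "1 \<le> n \<Longrightarrow> poly (legendre_antideriv n) a = 0"
  by (cases n) (simp_all add: legendre_antideriv_def)

lemma integral_shifted_legendre_mult:
  assumes "1 \<le> n"
  shows "integral {a..b} (poly (SL n * q)) = - integral {a..b} (poly (legendre_antideriv n * pderiv q))"
  using integral_poly_by_parts[of a b "legendre_antideriv n" q] cell_nonempty
  by (simp add: pderiv_legendre_antideriv[OF assms] poly_legendre_antideriv_left[OF assms])

lemma legendre_antideriv_mult:
  "legendre_antideriv n * q = smult ((b - a) / (2 * (2 * real n + 1))) (SL (Suc n) * q - SL (n - 1) * q)"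
  by (simp add: legendre_antideriv_def left_diff_distrib)

lemma pderiv_shifted_legendre_mult_antideriv:
  assumes n: "1 \<le> n"
  shows "pderiv (SL n) * - legendre_antideriv n =
    smult (real (2 * n - 1) / (2 * real n + 1)) (SL (n - 1) * SL (n - 1) - SL (n + 1) * SL (n - 1))
    + smult ((b - a) / (2 * (2 * real n + 1))) (pderiv (SL (n - 2)) * (SL (n - 1) - SL (n + 1)))"
proof -
  define c0 where "c0 = (b - a) / (2 * (2 * real n + 1))"
  define c1 where "c1 = 2 / (b - a) * (2 * real (n - 1) + 1)"
  have c0_c1: "c0 * c1 = real (2 * n - 1) / (2 * real n + 1)"
  proof -
    have cancel: "h / (2 * d) * (2 / h * e) = e / d" if "h \<noteq> 0" for h d e :: real
      using that by simp
    have e: "2 * real (n - 1) + 1 = real (2 * n - 1)"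
      using n by (simp add: of_nat_diff)
    show ?thesis
      unfolding c0_def c1_def e by (intro cancel) (use cell_nonempty in simp)
  qed
  have "pderiv (SL n) = smult c1 (SL (n - 1)) + pderiv (SL (n - 2))"
    using pderiv_shifted_legendre_Suc[of "n - 1"] n by (simp add: c1_def numeral_2_eq_2)
  then show ?thesis
    unfolding c0_c1[symmetric] c0_def[symmetric]
    by (intro poly_ext) (simp add: legendre_antideriv_def c0_def algebra_simps)
qed

lemma shifted_legendre_orthogonal:
  "degree q < n \<Longrightarrow> integral {a..b} (poly (SL n * q)) = 0"
proof (induction "degree q" arbitrary: q n rule: less_induct)
  case less
  have n: "1 \<le> n"
    using less.prems by simp
  show ?case
  proof (cases "pderiv q = 0")
    case True
    then show ?thesis
      by (simp add: integral_shifted_legendre_mult[OF n])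
  next
    case False
    then have dq: "degree (pderiv q) < degree q" "degree (pderiv q) < n - 1"
      using less.prems by (auto simp: pderiv_eq_0_iff degree_pderiv)
    have "integral {a..b} (poly (SL (Suc n) * pderiv q)) = 0"
      "integral {a..b} (poly (SL (n - 1) * pderiv q)) = 0"
      using less.hyps[OF dq(1)] dq by auto
    then show ?thesis
      by (simp add: integral_shifted_legendre_mult[OF n] legendre_antideriv_mult
          integral_poly_smult integral_poly_diff)
  qed
qed

lemma shifted_legendre_orthogonal_pderiv:
  assumes "degree p \<le> n"
  shows "integral {a..b} (poly (SL n * pderiv p)) = 0"
proof (cases "degree p = 0")
  case True
  then show ?thesis
    by (simp add: pderiv_eq_0_iff[THEN iffD2])
next
  case False
  then show ?thesis
    using assms by (intro shifted_legendre_orthogonal) (simp add: degree_pderiv)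
qed

lemma integral_shifted_legendre_square:
  "integral {a..b} (poly (SL n * SL n)) = (b - a) / (2 * real n + 1)"
proof (induction n)
  case 0
  then show ?case
    using cell_nonempty by (simp add: shifted_legendre_def pcompose_1 poly_1[abs_def])
next
  case (Suc m)
  define c0 where "c0 = (b - a) / (2 * (2 * real (Suc m) + 1))"
  define c1 where "c1 = 2 / (b - a) * (2 * real m + 1)"
  have "SL m * pderiv (SL (Suc m)) = smult c1 (SL m * SL m) + SL m * pderiv (SL (m - 1))"
    by (simp add: pderiv_shifted_legendre_Suc c1_def distrib_left)
  moreover have "integral {a..b} (poly (SL m * pderiv (SL (m - 1)))) = 0"
    by (rule shifted_legendre_orthogonal_pderiv) simp
  ultimately have lower:
    "integral {a..b} (poly (SL m * pderiv (SL (Suc m)))) = c1 * ((b - a) / (2 * real m + 1))"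
    by (simp add: integral_poly_add integral_poly_smult Suc.IH)
  have upper: "integral {a..b} (poly (SL (Suc (Suc m)) * pderiv (SL (Suc m)))) = 0"
    by (rule shifted_legendre_orthogonal_pderiv) simp
  have "integral {a..b} (poly (SL (Suc m) * SL (Suc m))) = c0 * c1 * ((b - a) / (2 * real m + 1))"
    by (simp add: integral_shifted_legendre_mult legendre_antideriv_mult c0_def
        integral_poly_smult integral_poly_diff lower upper)
  also have "\<dots> = (b - a) / (2 * real (Suc m) + 1)"
  proof -
    have cancel: "h / (2 * d) * (2 / h * c) * (h / c) = h / d" if "h \<noteq> 0" "c \<noteq> 0" "d \<noteq> 0"
      for h c d :: real
      using that by (simp add: field_simps)
    show ?thesis
      unfolding c0_def c1_def by (rule cancel) (use cell_nonempty in auto)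
  qed
  finally show ?case .
qed

end

section \<open>The form on one cell\<close>

lemma Rerr_poly_0 [simp]: "Rerr a b k s A (poly 0) = 0"
  by (simp add: Rerr_def Qrule_def)

lemma Rerr_poly_add:
  "Rerr a b k s A (poly (p + q)) = Rerr a b k s A (poly p) + Rerr a b k s A (poly q)"
  by (simp add: Rerr_def Qrule_def integral_poly_add sum.distrib algebra_simps)

lemma Rerr_poly_diff:
  "Rerr a b k s A (poly (p - q)) = Rerr a b k s A (poly p) - Rerr a b k s A (poly q)"
  by (simp add: Rerr_def Qrule_def integral_poly_diff sum_subtractf algebra_simps)

lemma Rerr_poly_smult: "Rerr a b k s A (poly (smult c p)) = c * Rerr a b k s A (poly p)"
  by (simp add: Rerr_def Qrule_def integral_poly_smult sum_distrib_left algebra_simps)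

lemma Rerr_poly_sum: "Rerr a b k s A (poly (\<Sum>i\<in>I. f i)) = (\<Sum>i\<in>I. Rerr a b k s A (poly (f i)))"
  by (induction I rule: infinite_finite_induct) (simp_all add: Rerr_poly_add del: poly_0 poly_add)

definition quadrature_exact :: "nat \<Rightarrow> real \<Rightarrow> real \<Rightarrow> nat \<Rightarrow> (nat \<Rightarrow> real) \<Rightarrow> (nat \<Rightarrow> real) \<Rightarrow> bool"
  where "quadrature_exact d a b k s A \<longleftrightarrow> (\<forall>p. degree p \<le> d \<longrightarrow> Rerr a b k s A (poly p) = 0)"

lemma quadrature_exact_if_exact_on_powers:
  assumes "\<And>d. d \<le> D \<Longrightarrow> Rerr a b k s A (poly ([:c, -1 :] ^ d)) = 0"
  shows "quadrature_exact D a b k s A"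
  unfolding quadrature_exact_def
proof (intro allI impI)
  fix p :: "real poly"
  assume p: "degree p \<le> D"
  define p' where "p' = pcompose p [:c, -1 :]"
  have p_eq: "p = (\<Sum>d\<le>degree p'. smult (coeff p' d) ([:c, -1 :] ^ d))"
  proof (rule poly_ext)
    fix x
    have "poly p x = poly p' (c - x)"
      by (simp add: p'_def poly_pcompose)
    then show "poly p x = poly (\<Sum>d\<le>degree p'. smult (coeff p' d) ([:c, -1 :] ^ d)) x"
      by (simp add: poly_altdef[of p'] poly_sum)
  qed
  have "degree p' = degree p"
    by (simp add: p'_def degree_pcompose)
  have "Rerr a b k s A (poly p) =
      (\<Sum>d\<le>degree p'. Rerr a b k s A (poly (smult (coeff p' d) ([:c, -1 :] ^ d))))"
    by (subst p_eq) (rule Rerr_poly_sum)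
  also have "\<dots> = 0"
    using assms p \<open>degree p' = degree p\<close> by (intro sum.neutral) (simp add: Rerr_poly_smult)
  finally show "Rerr a b k s A (poly p) = 0" .
qed

definition cell_form :: "nat \<Rightarrow> (nat \<Rightarrow> real) \<Rightarrow> (nat \<Rightarrow> real) \<Rightarrow> real poly \<Rightarrow> real poly \<Rightarrow> real"
  where "cell_form k s A v w = (\<Sum>j\<le>k. Mstar_coef s A w j * integral {s j..s (Suc j)} (poly v))"

lemma bform_eq_sum_cell_form: "bform N k s A v w = (\<Sum>i<N. cell_form k (s i) (A i) (v i) (w i))"
  by (simp add: bform_def cell_form_def)

lemma cell_form_0_left [simp]: "cell_form k s A 0 w = 0"
  by (simp add: cell_form_def)

lemma cell_form_add_smult_left:
  "cell_form k s A (smult c u + v) w = c * cell_form k s A u w + cell_form k s A v w"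
  by (simp add: cell_form_def integral_poly_add integral_poly_smult sum.distrib sum_distrib_left
      algebra_simps)

lemma cell_form_add_smult_right:
  "cell_form k s A w (smult c u + v) = c * cell_form k s A w u + cell_form k s A w v"
  by (simp add: cell_form_def Mstar_coef_def pderiv_add pderiv_smult sum.distrib sum_distrib_left
      algebra_simps)

definition is_cell_inner_product :: "nat \<Rightarrow> (nat \<Rightarrow> real) \<Rightarrow> (nat \<Rightarrow> real) \<Rightarrow> bool" where
  "is_cell_inner_product k s A \<longleftrightarrow>
     (\<forall>v w. degree v \<le> k \<longrightarrow> degree w \<le> k \<longrightarrow> cell_form k s A v w = cell_form k s A w v) \<and>
     (\<forall>v. degree v \<le> k \<longrightarrow> v \<noteq> 0 \<longrightarrow> 0 < cell_form k s A v v)"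

(* Both products have x^(2k)-coefficient -k/(k+1) * coeff v k * coeff w k. *)
lemma degree_pderiv_mult_antiderivative_diff_le:
  fixes v w U V :: "real poly"
  assumes U: "pderiv U = - v" and V: "pderiv V = - w"
    and v: "degree v \<le> k" and w: "degree w \<le> k" and k: "1 \<le> k"
  shows "degree (pderiv w * U - pderiv v * V) \<le> 2 * k - 1"
proof -
  let ?D = "pderiv w * U - pderiv v * V"
  have dU: "degree U \<le> Suc k" and dV: "degree V \<le> Suc k"
    using degree_le_Suc_degree_pderiv[of U] degree_le_Suc_degree_pderiv[of V] U V v w by simp_all
  have dv': "degree (pderiv v) \<le> k - 1" and dw': "degree (pderiv w) \<le> k - 1"
    using v w by (simp_all add: degree_pderiv)
  have cU: "real (Suc k) * coeff U (Suc k) = - coeff v k"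
    and cV: "real (Suc k) * coeff V (Suc k) = - coeff w k"
    using coeff_pderiv[of U k] coeff_pderiv[of V k] U V by simp_all
  have cv': "coeff (pderiv v) (k - 1) = real k * coeff v k"
    and cw': "coeff (pderiv w) (k - 1) = real k * coeff w k"
    using k by (simp_all add: coeff_pderiv)
  have "degree ?D \<le> (k - 1) + Suc k"
    using degree_mult_le[of "pderiv w" U] degree_mult_le[of "pderiv v" V] dU dV dv' dw'
    by (intro degree_diff_le) linarith+
  moreover have "coeff ?D ((k - 1) + Suc k) = 0"
  proof -
    have "coeff ?D ((k - 1) + Suc k) =
        coeff (pderiv w) (k - 1) * coeff U (Suc k) - coeff (pderiv v) (k - 1) * coeff V (Suc k)"
      unfolding coeff_diff coeff_mult_at_degree_bounds[OF dw' dU] coeff_mult_at_degree_bounds[OF dv' dV] ..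
    then have "real (Suc k) * coeff ?D ((k - 1) + Suc k) =
        real k * (coeff w k * (real (Suc k) * coeff U (Suc k))
          - coeff v k * (real (Suc k) * coeff V (Suc k)))"
      by (simp only: cv' cw') (simp add: algebra_simps)
    also have "\<dots> = 0"
      unfolding cU cV by (simp add: algebra_simps)
    finally show ?thesis
      by simp
  qed
  ultimately have "degree ?D \<le> (k - 1) + Suc k - 1"
    by (rule degree_le_pred_if_coeff_eq_0)
  then show ?thesis
    using k by simp
qed

lemma divide_Suc_swap_neq:
  assumes "m \<noteq> n"
  shows "real n / (real m + 1) \<noteq> real m / (real n + 1)"
proof
  assume "real n / (real m + 1) = real m / (real n + 1)"
  then have "real n * (real n + 1) = real m * (real m + 1)"
    by (simp add: field_simps)
  then have "(real n - real m) * (real n + real m + 1) = 0"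
    by (simp add: algebra_simps)
  with assms show False
    by simp
qed

locale quadrature_cell = cell +
  fixes k :: nat and s A :: "nat \<Rightarrow> real"
  assumes k_pos: "1 \<le> k"
    and s_first: "s 0 = a" and s_last: "s (k + 1) = b"
    and s_increasing: "\<forall>j\<le>k. s j < s (Suc j)"
begin

abbreviation R :: "real poly \<Rightarrow> real" where
  "R p \<equiv> Rerr a b k s A (poly p)"

abbreviation exact :: "nat \<Rightarrow> bool" where
  "exact d \<equiv> quadrature_exact d a b k s A"

abbreviation cf :: "real poly \<Rightarrow> real poly \<Rightarrow> real" where
  "cf \<equiv> cell_form k s A"

lemma exactD: "exact d \<Longrightarrow> degree p \<le> d \<Longrightarrow> R p = 0"
  by (simp add: quadrature_exact_def)

lemma tail_antiderivative_exists: "\<exists>U. pderiv U = - v \<and> poly U b = 0"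
proof -
  obtain V where "pderiv V = v"
    using poly_antiderivative_exists by blast
  then have "pderiv ([:poly V b:] - V) = - v \<and> poly ([:poly V b:] - V) b = 0"
    by (simp add: pderiv_diff pderiv_pCons)
  then show ?thesis
    by blast
qed

(* Summation by parts turns the sum over control volumes into w(a) U(a) + Q(w' U), and
   integration by parts identifies w(a) U(a) with (v, w) - integral of w' U. *)
lemma cell_form_eq_integral_minus_Rerr:
  assumes U: "pderiv U = - v" and Ub: "poly U b = 0"
  shows "cf v w = integral {a..b} (poly (v * w)) - R (pderiv w * U)"
proof -
  let ?g = "\<lambda>l. A l * poly (pderiv w) (s l)"
  have s_Suc_k: "s (Suc k) = b"
    using s_last by simp
  have subcell: "integral {s j..s (Suc j)} (poly v) = poly U (s j) - poly U (s (Suc j))" if "j \<le> k" for j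
  proof -
    have "s j \<le> s (Suc j)"
      using s_increasing that by (simp add: less_imp_le)
    then show ?thesis
      using integral_poly_pderiv[of "s j" "s (Suc j)" "- U"] by (simp add: U pderiv_minus)
  qed
  have "cf v w = (\<Sum>j\<le>k. (poly w a + (\<Sum>l\<le>j. ?g l)) * (poly U (s j) - poly U (s (Suc j))))"
    unfolding cell_form_def Mstar_coef_def s_first by (intro sum.cong refl) (simp add: subcell)
  also have "\<dots> = poly w a * poly U a + Qrule k s A (poly (pderiv w * U))"
    using summation_by_parts[where c = "poly w a" and g = ?g and f = "\<lambda>j. poly U (s j)" and n = k]
    by (simp add: Qrule_def s_first s_Suc_k Ub mult.assoc)
  also have "poly w a * poly U a = integral {a..b} (poly (v * w)) - integral {a..b} (poly (pderiv w * U))"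
    using integral_poly_by_parts[of a b U w] cell_nonempty
    by (simp add: U Ub integral_poly_minus mult.commute[of "pderiv w"] mult.commute[of "poly w a"]
        algebra_simps)
  finally show ?thesis
    by (simp add: Rerr_def del: poly_mult)
qed

lemma cell_form_symmetric:
  assumes exact: "exact (2 * k - 1)" and v: "degree v \<le> k" and w: "degree w \<le> k"
  shows "cf v w = cf w v"
proof -
  obtain U V where U: "pderiv U = - v" "poly U b = 0" and V: "pderiv V = - w" "poly V b = 0"
    using tail_antiderivative_exists by meson
  have "cf w v - cf v w = R (pderiv w * U - pderiv v * V)"
    by (simp add: cell_form_eq_integral_minus_Rerr[OF U] cell_form_eq_integral_minus_Rerr[OF V]
        Rerr_poly_diff mult.commute)
  also have "\<dots> = 0"
    using degree_pderiv_mult_antiderivative_diff_le[OF U(1) V(1) v w k_pos] by (rule exactD[OF exact])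
  finally show ?thesis
    by simp
qed

lemma cell_form_eq_integral:
  assumes exact: "exact (2 * k - 1)" and v: "degree v \<le> k - 1" and w: "degree w \<le> k"
  shows "cf v w = integral {a..b} (poly (v * w))"
proof -
  obtain U where U: "pderiv U = - v" "poly U b = 0"
    using tail_antiderivative_exists by blast
  have "degree U \<le> k"
    using degree_le_Suc_degree_pderiv[of U] U v k_pos by simp
  then have "degree (pderiv w * U) \<le> 2 * k - 1"
    using degree_pderiv_mult_le[of w U] w by linarith
  then show ?thesis
    by (simp add: cell_form_eq_integral_minus_Rerr[OF U] exactD[OF exact])
qed

lemma cell_form_shifted_legendre:
  assumes exact: "exact (2 * k - 1)"
  shows "cf (SL k) (SL k) =
    (b - a - real (2 * k - 1) * Qrule k s A (poly (SL (k + 1) * SL (k - 1)))) / (2 * real k + 1)"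
proof -
  let ?Q = "Qrule k s A (poly (SL (k + 1) * SL (k - 1)))"
  have "R (SL (k - 1) * SL (k - 1)) = 0"
    using degree_mult_le[of "SL (k - 1)" "SL (k - 1)"] by (intro exactD[OF exact]) simp
  moreover have "R (SL (k + 1) * SL (k - 1)) = - ?Q"
    using shifted_legendre_orthogonal[of "SL (k - 1)" "k + 1"] k_pos by (simp add: Rerr_def)
  moreover have "R (pderiv (SL (k - 2)) * (SL (k - 1) - SL (k + 1))) = 0"
  proof (rule exactD[OF exact])
    have "degree (SL (k - 1) - SL (k + 1)) \<le> k + 1"
      by (intro degree_diff_le) simp_all
    then show "degree (pderiv (SL (k - 2)) * (SL (k - 1) - SL (k + 1))) \<le> 2 * k - 1"
      using degree_pderiv_mult_le[of "SL (k - 2)" "SL (k - 1) - SL (k + 1)"] by simp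
  qed
  ultimately have R_eq:
    "R (pderiv (SL k) * - legendre_antideriv k) = real (2 * k - 1) / (2 * real k + 1) * ?Q"
    unfolding pderiv_shifted_legendre_mult_antideriv[OF k_pos] Rerr_poly_add Rerr_poly_smult
      Rerr_poly_diff
    by simp
  have "cf (SL k) (SL k) =
      integral {a..b} (poly (SL k * SL k)) - R (pderiv (SL k) * - legendre_antideriv k)"
    using k_pos
    by (intro cell_form_eq_integral_minus_Rerr) (simp_all add: pderiv_minus pderiv_legendre_antideriv)
  also have "\<dots> = (b - a) / (2 * real k + 1) - real (2 * k - 1) / (2 * real k + 1) * ?Q"
    unfolding R_eq integral_shifted_legendre_square ..
  finally show ?thesis
    by (simp only: diff_divide_distrib times_divide_eq_left)
qed

lemma cell_form_pos:
  assumes exact: "exact (2 * k - 1)" and legendre_pos: "0 < cf (SL k) (SL k)"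
    and p: "degree p \<le> k" "p \<noteq> 0"
  shows "0 < cf p p"
proof -
  define \<alpha> where "\<alpha> = coeff p k / coeff (SL k) k"
  define q where "q = p - smult \<alpha> (SL k)"
  have p_split: "p = smult \<alpha> (SL k) + q"
    by (simp add: q_def)
  have "coeff (SL k) k \<noteq> 0"
    using shifted_legendre_nonzero[of k] leading_coeff_0_iff[of "SL k"] by simp
  then have "coeff q k = 0"
    by (simp add: q_def \<alpha>_def)
  moreover have "degree q \<le> k"
    unfolding q_def using p(1) by (intro degree_diff_le) simp_all
  ultimately have q: "degree q \<le> k - 1"
    by (intro degree_le_pred_if_coeff_eq_0)
  have "cf q (SL k) = 0"
    using cell_form_eq_integral[OF exact q] shifted_legendre_orthogonal[of q k] q k_pos
    by (simp add: mult.commute)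
  moreover have "cf (SL k) q = cf q (SL k)"
    using q by (intro cell_form_symmetric[OF exact]) simp_all
  moreover have "cf q q = integral {a..b} (poly (q * q))"
    using q by (intro cell_form_eq_integral[OF exact]) simp_all
  ultimately have "cf p p = \<alpha> * \<alpha> * cf (SL k) (SL k) + integral {a..b} (poly (q * q))"
    unfolding p_split cell_form_add_smult_left cell_form_add_smult_right by simp
  moreover have "integral {a..b} (poly (q * q)) \<ge> 0"
    using integral_poly_square_pos[OF cell_nonempty, of q] by (cases "q = 0") auto
  moreover have "\<alpha> = 0 \<Longrightarrow> integral {a..b} (poly (q * q)) > 0"
    using integral_poly_square_pos[OF cell_nonempty p(2)] by (simp add: q_def)
  moreover have "\<alpha> \<noteq> 0 \<Longrightarrow> \<alpha> * \<alpha> * cf (SL k) (SL k) > 0"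
    using legendre_pos by (metis mult_pos_pos not_real_square_gt_zero)
  ultimately show ?thesis
    by (cases "\<alpha> = 0") (auto intro: add_pos_nonneg)
qed

lemma cell_form_reflected_powers:
  "cf ([:b, -1 :] ^ m) ([:b, -1 :] ^ n) =
    integral {a..b} (poly ([:b, -1 :] ^ m * [:b, -1 :] ^ n))
      + real n / (real m + 1) * R ([:b, -1 :] ^ (m + n))"
proof -
  define U where "U = smult (1 / (real m + 1)) ([:b, -1 :] ^ Suc m)"
  have U: "pderiv U = - ([:b, -1 :] ^ m)"
  proof -
    have "(- 1 - real m) / (real m + 1) = - 1"
      by (simp add: divide_eq_minus_1_iff)
    then show ?thesis
      by (simp add: U_def pderiv_smult pderiv_power_Suc pderiv_pCons del: power_Suc)
  qed
  have Ub: "poly U b = 0"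
    by (simp add: U_def)
  have U_mult: "pderiv ([:b, -1 :] ^ n) * U = smult (- (real n / (real m + 1))) ([:b, -1 :] ^ (m + n))"
  proof (cases n)
    case (Suc n')
    show ?thesis
      by (intro poly_ext)
        (simp add: Suc U_def pderiv_power_Suc pderiv_pCons field_simps power_add[symmetric]
          del: power_Suc)
  qed simp
  show ?thesis
    unfolding cell_form_eq_integral_minus_Rerr[OF U Ub] U_mult Rerr_poly_smult by simp
qed

lemma exact_if_cell_form_symmetric:
  assumes sym: "\<And>v w. degree v \<le> k \<Longrightarrow> degree w \<le> k \<Longrightarrow> cf v w = cf w v"
    and exact: "exact (k - 1)"
  shows "exact (2 * k - 1)"
proof -
  let ?y = "[:b, -1 :]"
  have deg_y: "degree (?y ^ m) \<le> m" for m
    using degree_power_le[of ?y m] by simp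
  have R_y: "R (?y ^ d) = 0" if d: "d \<le> 2 * k - 1" for d
  proof (cases "d = 0")
    case True
    then show ?thesis
      using exactD[OF exact, of 1] by simp
  next
    case False
    \<comment> \<open>symmetry on the pair (y^m, y^n) then gives (n/(m+1) - m/(n+1)) R(y^d) = 0\<close>
    obtain m n where mn: "m + n = d" "m \<noteq> n" "m \<le> k" "n \<le> k"
    proof (cases "d \<le> k")
      case True
      then show ?thesis
        using that[of 0 d] False by simp
    next
      case False
      then show ?thesis
        using that[of "d - k" k] d k_pos by simp
    qed
    have "cf (?y ^ m) (?y ^ n) = cf (?y ^ n) (?y ^ m)"
      using deg_y mn by (intro sym) (auto intro: order_trans)
    then have "(real n / (real m + 1) - real m / (real n + 1)) * R (?y ^ d) = 0"
      unfolding cell_form_reflected_powers using mn(1)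
      by (simp add: mult.commute add.commute algebra_simps)
    then show ?thesis
      using divide_Suc_swap_neq[OF mn(2)] by simp
  qed
  show ?thesis
    using R_y by (rule quadrature_exact_if_exact_on_powers)
qed

lemma is_cell_inner_product_iff:
  assumes exact: "exact (k - 1)"
  shows "is_cell_inner_product k s A \<longleftrightarrow>
    exact (2 * k - 1) \<and> 0 < (b - a) / real (2 * k - 1) - Qrule k s A (poly (SL (k + 1) * SL (k - 1)))"
proof -
  have legendre_pos_iff: "0 < cf (SL k) (SL k) \<longleftrightarrow>
      0 < (b - a) / real (2 * k - 1) - Qrule k s A (poly (SL (k + 1) * SL (k - 1)))"
    if "exact (2 * k - 1)"
    using k_pos by (simp add: cell_form_shifted_legendre[OF that] zero_less_divide_iff
        pos_less_divide_eq algebra_simps)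
  show ?thesis
  proof
    assume ip: "is_cell_inner_product k s A"
    then have "exact (2 * k - 1)"
      using exact by (intro exact_if_cell_form_symmetric) (auto simp: is_cell_inner_product_def)
    moreover have "0 < cf (SL k) (SL k)"
      using ip shifted_legendre_nonzero[of k] by (simp add: is_cell_inner_product_def)
    ultimately show "exact (2 * k - 1) \<and>
        0 < (b - a) / real (2 * k - 1) - Qrule k s A (poly (SL (k + 1) * SL (k - 1)))"
      using legendre_pos_iff by blast
  next
    assume "exact (2 * k - 1) \<and>
        0 < (b - a) / real (2 * k - 1) - Qrule k s A (poly (SL (k + 1) * SL (k - 1)))"
    then show "is_cell_inner_product k s A"
      using legendre_pos_iff cell_form_symmetric cell_form_pos
      unfolding is_cell_inner_product_def by blast
  qed
qed

end

section \<open>The form on the whole mesh\<close>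

lemma bform_single_cell:
  assumes "i < N"
  shows "bform N k s A (\<lambda>j. if j = i then p else 0) (\<lambda>j. if j = i then q else 0) =
    cell_form k (s i) (A i) p q"
  using assms
  by (simp add: bform_eq_sum_cell_form if_distrib[of "\<lambda>v. cell_form k _ _ v _"] cong: if_cong)

lemma is_cell_inner_product_if_is_inner_product_bform:
  assumes ip: "is_inner_product (Vk N k) (bform N k s A)" and i: "i < N"
  shows "is_cell_inner_product k (s i) (A i)"
proof -
  let ?e = "\<lambda>p j. if j = i then p else (0 :: real poly)"
  have e_Vk: "degree p \<le> k \<Longrightarrow> ?e p \<in> Vk N k" for p
    using i by (simp add: Vk_def)
  have e_nonzero: "p \<noteq> 0 \<Longrightarrow> ?e p \<noteq> (\<lambda>j. 0)" for p
    by (metis (mono_tags))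
  show ?thesis
    unfolding is_cell_inner_product_def
  proof (intro conjI allI impI)
    fix v w :: "real poly"
    assume "degree v \<le> k" "degree w \<le> k"
    then show "cell_form k (s i) (A i) v w = cell_form k (s i) (A i) w v"
      using ip e_Vk unfolding is_inner_product_def bform_single_cell[OF i, symmetric] by blast
  next
    fix v :: "real poly"
    assume "degree v \<le> k" "v \<noteq> 0"
    then show "0 < cell_form k (s i) (A i) v v"
      using ip e_Vk e_nonzero unfolding is_inner_product_def bform_single_cell[OF i, symmetric]
      by blast
  qed
qed

lemma is_inner_product_bform_if_cells:
  assumes cells: "\<forall>i<N. is_cell_inner_product k (s i) (A i)"
  shows "is_inner_product (Vk N k) (bform N k s A)"
  unfolding is_inner_product_def
proof (intro conjI ballI allI impI)
  fix u v w :: "nat \<Rightarrow> real poly" and c :: real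
  show "bform N k s A (\<lambda>i. smult c (u i) + v i) w = c * bform N k s A u w + bform N k s A v w"
    "bform N k s A w (\<lambda>i. smult c (u i) + v i) = c * bform N k s A w u + bform N k s A w v"
    by (simp_all add: bform_eq_sum_cell_form cell_form_add_smult_left cell_form_add_smult_right
        sum.distrib sum_distrib_left)
next
  fix v w
  assume "v \<in> Vk N k" "w \<in> Vk N k"
  then show "bform N k s A v w = bform N k s A w v"
    using cells unfolding bform_eq_sum_cell_form is_cell_inner_product_def Vk_def
    by (intro sum.cong) auto
next
  fix v
  assume v: "v \<in> Vk N k" and "v \<noteq> (\<lambda>i. 0)"
  then obtain i where vi: "v i \<noteq> 0"
    by auto
  then have i: "i < N"
    using v by (auto simp: Vk_def not_less[symmetric])
  have pos: "0 < cell_form k (s j) (A j) (v j) (v j)" if "j < N" "v j \<noteq> 0" for j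
    using cells v that by (auto simp: is_cell_inner_product_def Vk_def)
  have "0 \<le> cell_form k (s j) (A j) (v j) (v j)" if "j < N" for j
    using pos[OF that] by (cases "v j = 0") auto
  then show "0 < bform N k s A v v"
    unfolding bform_eq_sum_cell_form using pos[OF i vi] i by (intro sum_pos2[of "{..<N}" i]) auto
qed

lemma is_inner_product_bform_iff:
  "is_inner_product (Vk N k) (bform N k s A) \<longleftrightarrow> (\<forall>i<N. is_cell_inner_product k (s i) (A i))"
  using is_cell_inner_product_if_is_inner_product_bform is_inner_product_bform_if_cells by blast

theorem theorem3p5:
  fixes N k :: nat and x :: "nat \<Rightarrow> real" and s A :: "nat \<Rightarrow> nat \<Rightarrow> real"
  assumes "k \<ge> 1" and "0 < N"
    and "\<forall>i<N. x i < x (Suc i)"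
    and "\<forall>i<N. s i 0 = x i \<and> s i (k + 1) = x (Suc i)"
    and "\<forall>i<N. \<forall>j\<le>k. s i j < s i (Suc j)"
    and "\<forall>i<N. \<forall>p. degree p \<le> k - 1 \<longrightarrow> Rerr (x i) (x (Suc i)) k (s i) (A i) (poly p) = 0"
  shows "is_inner_product (Vk N k) (bform N k s A) \<longleftrightarrow>
    (\<forall>i<N. (\<forall>p. degree p \<le> 2 * k - 1 \<longrightarrow> Rerr (x i) (x (Suc i)) k (s i) (A i) (poly p) = 0) \<and>
       (x (Suc i) - x i) / real (2 * k - 1)
         - Qrule k (s i) (A i) (poly (shifted_legendre (x i) (x (Suc i)) (k + 1)
                                      * shifted_legendre (x i) (x (Suc i)) (k - 1))) > 0)"
proof -
  have "is_cell_inner_product k (s i) (A i) \<longleftrightarrow>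
      quadrature_exact (2 * k - 1) (x i) (x (Suc i)) k (s i) (A i) \<and>
      0 < (x (Suc i) - x i) / real (2 * k - 1)
        - Qrule k (s i) (A i) (poly (shifted_legendre (x i) (x (Suc i)) (k + 1)
                                     * shifted_legendre (x i) (x (Suc i)) (k - 1)))"
    if i: "i < N" for i
  proof -
    interpret quadrature_cell "x i" "x (Suc i)" k "s i" "A i"
      using assms i by unfold_locales auto
    show ?thesis
      using assms(6) i by (intro is_cell_inner_product_iff) (simp add: quadrature_exact_def)
  qed
  then show ?thesis
    by (simp add: is_inner_product_bform_iff quadrature_exact_def)
qed

end
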